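(* Let $G$ be a simple, connected, finite graph with transition matrix $T=T(G)$. Then the Grover walk on $G$ is periodic if and only if $\cos^{-1}(\lambda)\in\pi\mathbb{Q}$ for every eigenvalue $\lambda$ of $T$.
   Context: For a simple connected finite graph $G=(V,E)$, let $\mathcal{A}=\{(u,v),(v,u)\mid uv\in E\}$ be the set of arcs; for an arc $e=(u,v)$ write $o(e)=u$, $t(e)=v$, and $\bar e=(v,u)$. The Grover walk on $G$ has time evolution $U$ on $\mathbb{C}^{\mathcal{A}}$ with entries $U_{e,f}=2/\deg t(f)$ if $t(f)=o(e)$ and $e\neq\bar f$; $U_{e,f}=2/\deg t(f)-1$ if $e=\bar f$; and $U_{e,f}=0$ otherwise. The walk (or $G$) is periodic if $U^k=I$ for some positive integer $k$. The transition matrix $T$ on $\mathbb{C}^V$ has entries $T_{u,v}=1/\deg u$ if $u\sim v$ and $0$ otherwise (its eigenvalues are real and lie in $[-1,1]$). *)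

theory Defs
  imports "HOL-Analysis.Analysis"
begin

definition simple_graph :: "'v set \<Rightarrow> ('v \<Rightarrow> 'v \<Rightarrow> bool) \<Rightarrow> bool" where
  "simple_graph V Adj \<longleftrightarrow> finite V \<and> (\<forall>u v. Adj u v \<longrightarrow> u \<in> V \<and> v \<in> V)
     \<and> (\<forall>u v. Adj u v \<longrightarrow> Adj v u) \<and> (\<forall>u. \<not> Adj u u)"

definition connected_graph :: "'v set \<Rightarrow> ('v \<Rightarrow> 'v \<Rightarrow> bool) \<Rightarrow> bool" where
  "connected_graph V Adj \<longleftrightarrow> V \<noteq> {} \<and>
     (\<forall>u\<in>V. \<forall>v\<in>V. (u, v) \<in> {(x, y). Adj x y}\<^sup>*)"

definition deg :: "'v set \<Rightarrow> ('v \<Rightarrow> 'v \<Rightarrow> bool) \<Rightarrow> 'v \<Rightarrow> nat" where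
  "deg V Adj v = card {u \<in> V. Adj v u}"

text \<open>Arcs: ordered pairs (u,v) with uv an edge; o(e) = fst e, t(e) = snd e, reverse = prod.swap.\<close>
definition arcs :: "('v \<Rightarrow> 'v \<Rightarrow> bool) \<Rightarrow> ('v \<times> 'v) set" where
  "arcs Adj = {(u, v). Adj u v}"

definition grover_U :: "'v set \<Rightarrow> ('v \<Rightarrow> 'v \<Rightarrow> bool) \<Rightarrow> ('v \<times> 'v) \<Rightarrow> ('v \<times> 'v) \<Rightarrow> complex" where
  "grover_U V Adj e f =
     (if e = prod.swap f then 2 / of_nat (deg V Adj (snd f)) - 1
      else if snd f = fst e then 2 / of_nat (deg V Adj (snd f))
      else 0)"

definition idmat :: "'i \<Rightarrow> 'i \<Rightarrow> complex" where
  "idmat i j = (if i = j then 1 else 0)"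

definition matmul :: "'i set \<Rightarrow> ('i \<Rightarrow> 'i \<Rightarrow> complex) \<Rightarrow> ('i \<Rightarrow> 'i \<Rightarrow> complex) \<Rightarrow> 'i \<Rightarrow> 'i \<Rightarrow> complex" where
  "matmul I M N i j = (\<Sum>k\<in>I. M i k * N k j)"

fun matpow :: "'i set \<Rightarrow> ('i \<Rightarrow> 'i \<Rightarrow> complex) \<Rightarrow> nat \<Rightarrow> 'i \<Rightarrow> 'i \<Rightarrow> complex" where
  "matpow I M 0 = idmat"
| "matpow I M (Suc n) = matmul I M (matpow I M n)"

definition grover_periodic :: "'v set \<Rightarrow> ('v \<Rightarrow> 'v \<Rightarrow> bool) \<Rightarrow> bool" where
  "grover_periodic V Adj \<longleftrightarrow>
     (\<exists>k>0. \<forall>e\<in>arcs Adj. \<forall>f\<in>arcs Adj.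
        matpow (arcs Adj) (grover_U V Adj) k e f = idmat e f)"

definition trans_T :: "'v set \<Rightarrow> ('v \<Rightarrow> 'v \<Rightarrow> bool) \<Rightarrow> 'v \<Rightarrow> 'v \<Rightarrow> complex" where
  "trans_T V Adj u v = (if Adj u v then 1 / of_nat (deg V Adj u) else 0)"

definition is_eigenvalue :: "'i set \<Rightarrow> ('i \<Rightarrow> 'i \<Rightarrow> complex) \<Rightarrow> complex \<Rightarrow> bool" where
  "is_eigenvalue I M c \<longleftrightarrow>
     (\<exists>x :: 'i \<Rightarrow> complex. (\<exists>i\<in>I. x i \<noteq> 0) \<and>
        (\<forall>i\<in>I. (\<Sum>j\<in>I. M i j * x j) = c * x i))"

end

(*
  The Grover matrix U is real with orthonormal columns, hence unitary, so U^k = I for some k > 0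
  exactly when every eigenvalue of U is a root of unity: after Schur triangularisation U^k - I is
  nilpotent, and a unipotent unitary matrix is the identity.

  The spectra of U and T are linked by lifting and projecting eigenvectors. If T x = l x, then
  psi(u,v) = x(v) - mu x(u) with mu = exp(i arccos l), a root of mu^2 - 2 l mu + 1, satisfies
  U psi = mu psi, unless psi = 0, which forces l in {-1, 0, 1}. Conversely, if U psi = mu psi with
  |mu| = 1, the in-flow X(v) = sum of psi over the arcs entering v satisfies T y = (Re mu) y for
  y(v) = X(v) / deg v, unless X = 0, which forces mu^2 = 1. Finally exp(i t) is a root of unity
  iff t is a rational multiple of pi.
*)
theory Submission
  imports Defs "Jordan_Normal_Form.Spectral_Radius" "Jordan_Normal_Form.Jordan_Normal_Form_Uniqueness"
begin

(* HOL-Analysis and Jordan_Normal_Form both write $ for vector indexing. *)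
unbundle no vec_syntax

section \<open>Unitary matrices\<close>

definition unitary_mat :: "nat \<Rightarrow> complex mat \<Rightarrow> bool" where
  "unitary_mat n A \<longleftrightarrow> A \<in> carrier_mat n n \<and>
     (\<forall>a\<in>carrier_vec n. \<forall>b\<in>carrier_vec n. (A *\<^sub>v a) \<bullet>c (A *\<^sub>v b) = a \<bullet>c b)"

lemma unitary_matI_orthonormal_cols:
  assumes A: "A \<in> carrier_mat n n"
    and orth: "\<And>j l. j < n \<Longrightarrow> l < n \<Longrightarrow> col A j \<bullet>c col A l = (if j = l then 1 else 0)"
  shows "unitary_mat n A"
  unfolding unitary_mat_def
proof (intro conjI A ballI)
  fix a b :: "complex vec" assume a: "a \<in> carrier_vec n" and b: "b \<in> carrier_vec n"
  have "(A *\<^sub>v a) \<bullet>c (A *\<^sub>v b) =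
      (\<Sum>i<n. \<Sum>l<n. \<Sum>j<n. a $ j * cnj (b $ l) * (A $$ (i,j) * cnj (A $$ (i,l))))"
    using A a b by (simp add: scalar_prod_def atLeast0LessThan sum_distrib_left
        sum_distrib_right mult_ac)
  also have "\<dots> = (\<Sum>l<n. \<Sum>j<n. \<Sum>i<n. a $ j * cnj (b $ l) * (A $$ (i,j) * cnj (A $$ (i,l))))"
    by (subst sum.swap) (rule sum.cong[OF refl], rule sum.swap)
  also have "\<dots> = (\<Sum>l<n. \<Sum>j<n. a $ j * cnj (b $ l) * (col A j \<bullet>c col A l))"
    using A by (simp add: scalar_prod_def atLeast0LessThan sum_distrib_left)
  also have "\<dots> = (\<Sum>l<n. \<Sum>j<n. if j = l then a $ j * cnj (b $ l) else 0)"
    by (intro sum.cong refl) (simp add: orth)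
  also have "\<dots> = a \<bullet>c b"
    using b by (simp add: scalar_prod_def atLeast0LessThan)
  finally show "(A *\<^sub>v a) \<bullet>c (A *\<^sub>v b) = a \<bullet>c b" .
qed

lemma unitary_mat_pow: "unitary_mat n A \<Longrightarrow> unitary_mat n (A ^\<^sub>m k)"
proof (induction k)
  case 0
  then show ?case by (auto simp: unitary_mat_def)
next
  case (Suc k)
  then show ?case unfolding unitary_mat_def by (auto simp: assoc_mult_mat_vec[of _ n n _ n])
qed

lemma unitary_mat_eigenvalue_norm:
  assumes U: "unitary_mat n A" and ev: "eigenvalue A \<mu>"
  shows "cmod \<mu> = 1"
proof -
  obtain v where v: "v \<in> carrier_vec n" "v \<noteq> 0\<^sub>v n" and Av: "A *\<^sub>v v = \<mu> \<cdot>\<^sub>v v"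
    using ev U unfolding eigenvalue_def eigenvector_def unitary_mat_def by auto
  have "(\<mu> * cnj \<mu>) * (v \<bullet>c v) = (A *\<^sub>v v) \<bullet>c (A *\<^sub>v v)"
    using v by (simp add: Av conjugate_smult_vec mult_ac)
  also have "\<dots> = v \<bullet>c v"
    using U v unfolding unitary_mat_def by blast
  finally have "\<mu> * cnj \<mu> = 1"
    using v by simp
  then have "(cmod \<mu>)\<^sup>2 = 1"
    by (metis complex_norm_square of_real_eq_1_iff)
  then show ?thesis
    using norm_ge_zero[of \<mu>] by (auto simp: power2_eq_1_iff)
qed

lemma unitary_mat_kernel_inter_range:
  assumes U: "unitary_mat n W" and u: "u \<in> carrier_vec n"
    and ker: "(W - 1\<^sub>m n) *\<^sub>v ((W - 1\<^sub>m n) *\<^sub>v u) = 0\<^sub>v n"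
  shows "(W - 1\<^sub>m n) *\<^sub>v u = 0\<^sub>v n"
proof -
  have W: "W \<in> carrier_mat n n" using U unfolding unitary_mat_def by simp
  have N_apply: "(W - 1\<^sub>m n) *\<^sub>v x = W *\<^sub>v x - x" if "x \<in> carrier_vec n" for x
    using W that by (simp add: minus_mult_distrib_mat_vec)
  define w where "w = W *\<^sub>v u - u"
  have w: "w \<in> carrier_vec n" using W u unfolding w_def by simp
  have Nw: "W *\<^sub>v w - w = 0\<^sub>v n"
    using ker w u by (simp add: N_apply w_def)
  have fixed: "W *\<^sub>v w = w"
  proof (rule eq_vecI)
    fix i assume i: "i < dim_vec w"
    have "(W *\<^sub>v w - w) $ i = 0" using Nw w i by simp
    then show "(W *\<^sub>v w) $ i = w $ i" using W w i by simp
  qed (use W w in simp)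
  have "w \<bullet>c w = (W *\<^sub>v u) \<bullet>c w - u \<bullet>c w"
    unfolding w_def using W u w by (subst minus_scalar_prod_distrib) auto
  also have "(W *\<^sub>v u) \<bullet>c w = (W *\<^sub>v u) \<bullet>c (W *\<^sub>v w)"
    by (simp add: fixed)
  also have "\<dots> = u \<bullet>c w"
    using U u w unfolding unitary_mat_def by blast
  finally have "w = 0\<^sub>v n"
    using w by simp
  then show ?thesis
    using u by (simp add: N_apply w_def)
qed

lemma pow_mat_Suc_left: "A \<in> carrier_mat n n \<Longrightarrow> A ^\<^sub>m Suc k = A * A ^\<^sub>m k"
proof (induction k)
  case (Suc k)
  then show ?case
    by (simp add: assoc_mult_mat[of _ n n _ n _ n])
qed simp

lemma mat_eq_zeroI:
  fixes A :: "'a :: semiring_1 mat"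
  assumes A: "A \<in> carrier_mat n n" and zero: "\<And>v. v \<in> carrier_vec n \<Longrightarrow> A *\<^sub>v v = 0\<^sub>v n"
  shows "A = 0\<^sub>m n n"
proof (rule eq_matI)
  fix i j assume "i < dim_row (0\<^sub>m n n :: 'a mat)" "j < dim_col (0\<^sub>m n n :: 'a mat)"
  then have ij: "i < n" "j < n" by auto
  have "A $$ (i, j) = (A *\<^sub>v unit_vec n j) $ i"
    using A ij by simp
  then show "A $$ (i, j) = 0\<^sub>m n n $$ (i, j)"
    using zero[of "unit_vec n j"] ij by simp
qed (use A in auto)

lemma unitary_mat_unipotent_step:
  assumes U: "unitary_mat n W" and nil: "(W - 1\<^sub>m n) ^\<^sub>m Suc (Suc m) = 0\<^sub>m n n"
  shows "(W - 1\<^sub>m n) ^\<^sub>m Suc m = 0\<^sub>m n n"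
proof -
  define N where "N = W - 1\<^sub>m n"
  have N: "N \<in> carrier_mat n n" using U unfolding unitary_mat_def N_def by (auto intro: minus_carrier_mat)
  have Nm: "N ^\<^sub>m m \<in> carrier_mat n n" by (rule pow_carrier_mat[OF N])
  have "N ^\<^sub>m Suc m = 0\<^sub>m n n"
  proof (rule mat_eq_zeroI)
    show "N ^\<^sub>m Suc m \<in> carrier_mat n n" using N by (rule pow_carrier_mat)
    fix v :: "complex vec" assume v: "v \<in> carrier_vec n"
    define u where "u = N ^\<^sub>m m *\<^sub>v v"
    have u: "u \<in> carrier_vec n" unfolding u_def using Nm v by simp
    have Nu: "N ^\<^sub>m Suc m *\<^sub>v v = N *\<^sub>v u"
      unfolding pow_mat_Suc_left[OF N] u_def by (rule assoc_mult_mat_vec[OF N Nm v])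
    have "N *\<^sub>v (N *\<^sub>v u) = N ^\<^sub>m Suc (Suc m) *\<^sub>v v"
      unfolding pow_mat_Suc_left[OF N, of "Suc m"] Nu[symmetric]
      by (rule assoc_mult_mat_vec[symmetric, OF N pow_carrier_mat[OF N] v])
    also have "\<dots> = 0\<^sub>m n n *\<^sub>v v"
      unfolding N_def nil ..
    also have "\<dots> = 0\<^sub>v n"
      using v by (intro eq_vecI) auto
    finally have "N *\<^sub>v u = 0\<^sub>v n"
      unfolding N_def by (rule unitary_mat_kernel_inter_range[OF U u])
    then show "N ^\<^sub>m Suc m *\<^sub>v v = 0\<^sub>v n"
      unfolding Nu .
  qed
  then show ?thesis unfolding N_def .
qed

lemma unitary_mat_unipotent:
  assumes U: "unitary_mat n W" and nil: "(W - 1\<^sub>m n) ^\<^sub>m m = 0\<^sub>m n n"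
  shows "W = 1\<^sub>m n"
proof (cases "n = 0")
  case True
  then show ?thesis using U unfolding unitary_mat_def by auto
next
  case False
  have W: "W \<in> carrier_mat n n" using U unfolding unitary_mat_def by simp
  have "m \<noteq> 0"
  proof
    assume "m = 0"
    then have "(1\<^sub>m n :: complex mat) $$ (0, 0) = 0\<^sub>m n n $$ (0, 0)" using nil W by simp
    then show False using False by simp
  qed
  then obtain m' where m: "m = Suc m'" using not0_implies_Suc by blast
  have "(W - 1\<^sub>m n) ^\<^sub>m Suc k = 0\<^sub>m n n" if "k \<le> m'" for k
    using that
  proof (induction k rule: inc_induct)
    case base then show ?case using nil m by simp
  next
    case (step k)
    then show ?case using unitary_mat_unipotent_step[OF U] by blast
  qed
  then have zero: "W - 1\<^sub>m n = 0\<^sub>m n n" using W by fastforce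
  show ?thesis
  proof (rule eq_matI)
    fix i j assume "i < dim_row (1\<^sub>m n :: complex mat)" "j < dim_col (1\<^sub>m n :: complex mat)"
    then have "(W - 1\<^sub>m n) $$ (i, j) = 0" using zero by simp
    then show "W $$ (i, j) = 1\<^sub>m n $$ (i, j)" using W \<open>i < _\<close> \<open>j < _\<close> by simp
  qed (use W in auto)
qed

lemma index_mult_mat_sum:
  "A \<in> carrier_mat n n \<Longrightarrow> B \<in> carrier_mat n n \<Longrightarrow> i < n \<Longrightarrow> j < n \<Longrightarrow>
    (A * B) $$ (i, j) = (\<Sum>l<n. A $$ (i, l) * B $$ (l, j))"
  by (simp add: scalar_prod_def atLeast0LessThan)

lemma upper_triangular_mult:
  assumes A: "A \<in> carrier_mat n n" and B: "B \<in> carrier_mat n n"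
    and uA: "upper_triangular A" and uB: "upper_triangular B"
  shows "upper_triangular (A * B)"
    and "i < n \<Longrightarrow> (A * B) $$ (i, i) = A $$ (i, i) * B $$ (i, i)"
proof -
  have zA: "A $$ (i, l) = 0" and zB: "B $$ (i, l) = 0" if "i < n" "l < i" for i l
    using upper_triangularD[OF uA that(2)] upper_triangularD[OF uB that(2)] A B that(1) by simp_all
  have zero: "A $$ (i, l) * B $$ (l, j) = 0" if "i < n" "l < n" "j < i" for i j l
  proof (cases "l < i")
    case True
    then show ?thesis using zA[OF that(1)] by simp
  next
    case False
    then show ?thesis using zB[OF that(2), of j] that(3) by simp
  qed
  show "upper_triangular (A * B)"
  proof (rule upper_triangularI)
    fix i j assume "j < i" "i < dim_row (A * B)"
    then show "(A * B) $$ (i, j) = 0"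
      using A B zero by (simp add: index_mult_mat_sum[OF A B] del: index_mult_mat(1))
  qed
  show "(A * B) $$ (i, i) = A $$ (i, i) * B $$ (i, i)" if i: "i < n"
  proof -
    have "(A * B) $$ (i, i) = (\<Sum>l<n. A $$ (i, l) * B $$ (l, i))"
      by (rule index_mult_mat_sum[OF A B i i])
    also have "\<dots> = (\<Sum>l<n. if l = i then A $$ (i, i) * B $$ (i, i) else 0)"
    proof (rule sum.cong[OF refl])
      fix l assume "l \<in> {..<n}"
      then show "A $$ (i, l) * B $$ (l, i) = (if l = i then A $$ (i, i) * B $$ (i, i) else 0)"
        using zA[OF i, of l] zB[of l i] by (cases "l < i") auto
    qed
    also have "\<dots> = A $$ (i, i) * B $$ (i, i)"
      using i by simp
    finally show ?thesis .
  qed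
qed

lemma upper_triangular_pow:
  assumes A: "A \<in> carrier_mat n n" and uA: "upper_triangular A"
  shows "upper_triangular (A ^\<^sub>m k) \<and> (\<forall>i<n. (A ^\<^sub>m k) $$ (i, i) = A $$ (i, i) ^ k)"
proof (induction k)
  case (Suc k)
  have "A ^\<^sub>m k \<in> carrier_mat n n" using A by simp
  from upper_triangular_mult[OF this A] Suc uA show ?case
    by (simp add: power_commutes)
qed (use A in auto)

lemma strictly_upper_triangular_nilpotent:
  assumes N: "N \<in> carrier_mat n n"
    and strict: "\<And>i j. i < n \<Longrightarrow> j \<le> i \<Longrightarrow> N $$ (i, j) = 0"
  shows "N ^\<^sub>m n = 0\<^sub>m n n"
proof -
  have "(N ^\<^sub>m m) $$ (i, j) = 0" if "i < n" "j < n" "j < i + m" for i j m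
    using that
  proof (induction m arbitrary: j)
    case (Suc m)
    have "(N ^\<^sub>m m) $$ (i, l) * N $$ (l, j) = 0" if "l < n" for l
      using Suc strict[OF that] that by (cases "l < i + m") auto
    then show ?case
      using Suc.prems N by (simp add: index_mult_mat_sum[OF pow_carrier_mat[OF N] N] del: index_mult_mat(1))
  qed (use N in auto)
  then show ?thesis
    using N by (intro eq_matI) auto
qed

lemma upper_triangular_unipotent:
  fixes B :: "'a :: ring_1 mat"
  assumes B: "B \<in> carrier_mat n n" and uB: "upper_triangular B"
    and diag: "\<And>i. i < n \<Longrightarrow> B $$ (i, i) = 1"
  shows "(B - 1\<^sub>m n) ^\<^sub>m n = 0\<^sub>m n n"
proof (rule strictly_upper_triangular_nilpotent)
  show "B - 1\<^sub>m n \<in> carrier_mat n n" by (rule minus_carrier_mat) simp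
  fix i j assume "i < n" "j \<le> i"
  then show "(B - 1\<^sub>m n) $$ (i, j) = 0"
    using diag upper_triangularD[OF uB, of j i] B by (cases "j = i") auto
qed

lemma complex_schur_form:
  fixes A :: "complex mat"
  assumes A: "A \<in> carrier_mat n n"
  obtains B P Q where "similar_mat_wit A B P Q" and "upper_triangular B"
    and "\<And>i. i < n \<Longrightarrow> eigenvalue A (B $$ (i, i))"
proof -
  obtain es where cp: "char_poly A = (\<Prod>a\<leftarrow>es. [:- a, 1:])"
    using char_poly_factorized[OF A] by blast
  obtain B P Q where sd: "schur_decomposition A es = (B, P, Q)"
    by (cases "schur_decomposition A es") auto
  from schur_decomposition[OF A cp sd] have sim: "similar_mat_wit A B P Q"
    and uB: "upper_triangular B" and dB: "diag_mat B = es" by auto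
  have B: "B \<in> carrier_mat n n" using similar_mat_witD2[OF A sim] by auto
  have "eigenvalue A (B $$ (i, i))" if i: "i < n" for i
  proof -
    have "B $$ (i, i) \<in> set es" using dB i B unfolding diag_mat_def by auto
    then have "poly (char_poly A) (B $$ (i, i)) = 0" unfolding cp
      by (induction es) auto
    then show ?thesis using eigenvalue_root_char_poly[OF A] by simp
  qed
  with sim uB show ?thesis by (rule that)
qed

lemma unitary_mat_pow_eq_one:
  assumes U: "unitary_mat n A" and roots: "\<And>\<mu>. eigenvalue A \<mu> \<Longrightarrow> \<mu> ^ k = 1"
  shows "A ^\<^sub>m k = 1\<^sub>m n"
proof -
  have A: "A \<in> carrier_mat n n" using U unfolding unitary_mat_def by simp
  obtain B P Q where sim: "similar_mat_wit A B P Q" and uB: "upper_triangular B"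
    and diag: "\<And>i. i < n \<Longrightarrow> eigenvalue A (B $$ (i, i))"
    using complex_schur_form[OF A] by blast
  from similar_mat_witD2[OF A sim] have B: "B \<in> carrier_mat n n"
    and P: "P \<in> carrier_mat n n" and Q: "Q \<in> carrier_mat n n" by auto
  have char_matrix_one: "char_matrix X 1 = X - 1\<^sub>m n" if "X \<in> carrier_mat n n" for X :: "complex mat"
    using that unfolding char_matrix_def by (intro eq_matI) auto
  have "similar_mat_wit (A ^\<^sub>m k - 1\<^sub>m n) (B ^\<^sub>m k - 1\<^sub>m n) P Q"
    using similar_mat_wit_char_matrix[OF similar_mat_wit_pow[OF sim, of k], of 1]
    unfolding char_matrix_one[OF pow_carrier_mat[OF A]] char_matrix_one[OF pow_carrier_mat[OF B]] .
  then have "(A ^\<^sub>m k - 1\<^sub>m n) ^\<^sub>m n = P * (B ^\<^sub>m k - 1\<^sub>m n) ^\<^sub>m n * Q"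
    by (rule similar_mat_wit_pow_id)
  also have "(B ^\<^sub>m k - 1\<^sub>m n) ^\<^sub>m n = 0\<^sub>m n n"
  proof (rule upper_triangular_unipotent)
    show "upper_triangular (B ^\<^sub>m k)"
      using upper_triangular_pow[OF B uB] by blast
    show "(B ^\<^sub>m k) $$ (i, i) = 1" if "i < n" for i
      using upper_triangular_pow[OF B uB, of k] roots[OF diag[OF that]] that by simp
  qed (use B in simp)
  also have "P * 0\<^sub>m n n * Q = 0\<^sub>m n n" using P Q by simp
  finally show ?thesis
    by (rule unitary_mat_unipotent[OF unitary_mat_pow[OF U]])
qed

lemma eigenvector_pow_eq_one:
  fixes A :: "'a :: idom mat"
  assumes A: "A \<in> carrier_mat n n" and ev: "eigenvector A v \<mu>" and Ak: "A ^\<^sub>m k = 1\<^sub>m n"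
  shows "\<mu> ^ k = 1"
proof -
  have v: "v \<in> carrier_vec n" "v \<noteq> 0\<^sub>v n"
    using ev A unfolding eigenvector_def by auto
  obtain i where i: "i < n" "v $ i \<noteq> 0"
  proof (rule ccontr)
    assume "\<not> thesis"
    with that have "v = 0\<^sub>v n" using v(1) by (intro eq_vecI) auto
    with v(2) show False ..
  qed
  have "v = \<mu> ^ k \<cdot>\<^sub>v v"
    using eigenvector_pow[OF A ev, of k] v by (simp add: Ak)
  then have "v $ i = (\<mu> ^ k \<cdot>\<^sub>v v) $ i"
    by (rule arg_cong)
  also have "\<dots> = \<mu> ^ k * v $ i"
    using i v by simp
  finally show ?thesis
    using i(2) by simp
qed

lemma unitary_mat_periodic_iff_roots_of_unity:
  assumes U: "unitary_mat n A"
  shows "(\<exists>k>0. A ^\<^sub>m k = 1\<^sub>m n) \<longleftrightarrow> (\<forall>\<mu>. eigenvalue A \<mu> \<longrightarrow> (\<exists>k>0. \<mu> ^ k = 1))"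
proof
  have A: "A \<in> carrier_mat n n" using U unfolding unitary_mat_def by simp
  show "\<exists>k>0. A ^\<^sub>m k = 1\<^sub>m n" if roots: "\<forall>\<mu>. eigenvalue A \<mu> \<longrightarrow> (\<exists>k>0. \<mu> ^ k = 1)"
  proof -
    have "\<forall>\<mu>\<in>spectrum A. \<exists>k. k > 0 \<and> \<mu> ^ k = 1"
      using roots unfolding spectrum_def by simp
    from bchoice[OF this] obtain ord where ord: "\<forall>\<mu>\<in>spectrum A. ord \<mu> > 0 \<and> \<mu> ^ ord \<mu> = 1"
      by blast
    define K where "K = (\<Prod>\<mu>\<in>spectrum A. ord \<mu>)"
    have fin: "finite (spectrum A)" by (rule card_finite_spectrum[OF A])
    have "K > 0" unfolding K_def using ord fin by (intro prod_pos) auto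
    moreover have "\<mu> ^ K = 1" if "eigenvalue A \<mu>" for \<mu>
    proof -
      have \<mu>: "\<mu> \<in> spectrum A" using that unfolding spectrum_def by simp
      have "ord \<mu> dvd K" unfolding K_def using fin \<mu> by (rule dvd_prodI)
      then obtain c where "K = ord \<mu> * c" ..
      then show ?thesis using ord \<mu> by (simp add: power_mult)
    qed
    ultimately show ?thesis using unitary_mat_pow_eq_one[OF U] by blast
  qed
  show "\<forall>\<mu>. eigenvalue A \<mu> \<longrightarrow> (\<exists>k>0. \<mu> ^ k = 1)" if "\<exists>k>0. A ^\<^sub>m k = 1\<^sub>m n"
    using that eigenvector_pow_eq_one[OF A] unfolding eigenvalue_def by blast
qed

section \<open>Matrices indexed by a finite set\<close>

definition orthonormal_cols :: "'i set \<Rightarrow> ('i \<Rightarrow> 'i \<Rightarrow> complex) \<Rightarrow> bool" where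
  "orthonormal_cols I M \<longleftrightarrow> (\<forall>j\<in>I. \<forall>l\<in>I. (\<Sum>i\<in>I. M i j * cnj (M i l)) = idmat j l)"

definition fun_mat :: "'i list \<Rightarrow> ('i \<Rightarrow> 'i \<Rightarrow> complex) \<Rightarrow> complex mat" where
  "fun_mat xs M = mat (length xs) (length xs) (\<lambda>(i, j). M (xs ! i) (xs ! j))"

lemma dim_fun_mat [simp]:
  "dim_row (fun_mat xs M) = length xs" "dim_col (fun_mat xs M) = length xs"
  by (simp_all add: fun_mat_def)

lemma fun_mat_carrier: "fun_mat xs M \<in> carrier_mat (length xs) (length xs)"
  by (simp add: carrier_matI)

lemma index_fun_mat [simp]:
  "i < length xs \<Longrightarrow> j < length xs \<Longrightarrow> fun_mat xs M $$ (i, j) = M (xs ! i) (xs ! j)"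
  by (simp add: fun_mat_def)

lemma sum_set_distinct_conv_nth:
  assumes "distinct xs"
  shows "(\<Sum>e\<in>set xs. g e) = (\<Sum>i<length xs. g (xs ! i))"
proof -
  have "set xs = (!) xs ` {..<length xs}" by (auto simp: set_conv_nth)
  moreover have "inj_on ((!) xs) {..<length xs}" using assms by (intro inj_on_nth) auto
  ultimately show ?thesis by (simp add: sum.reindex)
qed

lemma idmat_nth:
  "distinct xs \<Longrightarrow> i < length xs \<Longrightarrow> j < length xs \<Longrightarrow> idmat (xs ! i) (xs ! j) = 1\<^sub>m (length xs) $$ (i, j)"
  by (simp add: idmat_def nth_eq_iff_index_eq)

lemma matpow_fun_mat:
  assumes xs: "distinct xs" and ij: "i < length xs" "j < length xs"
  shows "matpow (set xs) M k (xs ! i) (xs ! j) = (fun_mat xs M ^\<^sub>m k) $$ (i, j)"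
  using ij
proof (induction k arbitrary: i j)
  case 0
  then show ?case using idmat_nth[OF xs] by simp
next
  case (Suc k)
  define A where "A = fun_mat xs M"
  have A: "A \<in> carrier_mat (length xs) (length xs)" unfolding A_def by (rule fun_mat_carrier)
  have "matpow (set xs) M (Suc k) (xs ! i) (xs ! j) = (\<Sum>l<length xs. A $$ (i, l) * (A ^\<^sub>m k) $$ (l, j))"
    using Suc by (simp add: matmul_def sum_set_distinct_conv_nth[OF xs] A_def)
  also have "\<dots> = (A * A ^\<^sub>m k) $$ (i, j)"
    by (rule index_mult_mat_sum[OF A pow_carrier_mat[OF A] Suc.prems, symmetric])
  also have "\<dots> = (A ^\<^sub>m Suc k) $$ (i, j)"
    by (simp only: pow_mat_Suc_left[OF A])
  finally show ?case unfolding A_def .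
qed

lemma matpow_eq_idmat_iff_fun_mat:
  assumes xs: "distinct xs"
  shows "(\<forall>i\<in>set xs. \<forall>j\<in>set xs. matpow (set xs) M k i j = idmat i j) \<longleftrightarrow>
    fun_mat xs M ^\<^sub>m k = 1\<^sub>m (length xs)"
proof
  assume id: "\<forall>i\<in>set xs. \<forall>j\<in>set xs. matpow (set xs) M k i j = idmat i j"
  show "fun_mat xs M ^\<^sub>m k = 1\<^sub>m (length xs)"
  proof (rule eq_matI)
    fix i j assume "i < dim_row (1\<^sub>m (length xs))" "j < dim_col (1\<^sub>m (length xs))"
    then have ij: "i < length xs" "j < length xs" by auto
    have "matpow (set xs) M k (xs ! i) (xs ! j) = idmat (xs ! i) (xs ! j)"
      using id ij by simp
    then show "(fun_mat xs M ^\<^sub>m k) $$ (i, j) = 1\<^sub>m (length xs) $$ (i, j)"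
      unfolding matpow_fun_mat[OF xs ij] idmat_nth[OF xs ij] .
  qed simp_all
next
  assume "fun_mat xs M ^\<^sub>m k = 1\<^sub>m (length xs)"
  then show "\<forall>i\<in>set xs. \<forall>j\<in>set xs. matpow (set xs) M k i j = idmat i j"
    using matpow_fun_mat[OF xs] idmat_nth[OF xs] by (metis in_set_conv_nth)
qed

lemma fun_mat_mult_vec:
  assumes xs: "distinct xs" and i: "i < length xs"
  shows "(fun_mat xs M *\<^sub>v vec (length xs) (\<lambda>j. x (xs ! j))) $ i = (\<Sum>e\<in>set xs. M (xs ! i) e * x e)"
  using i by (simp add: scalar_prod_def sum_set_distinct_conv_nth[OF xs] atLeast0LessThan)

lemma eigenvector_fun_mat_iff:
  assumes xs: "distinct xs"
  shows "eigenvector (fun_mat xs M) (vec (length xs) (\<lambda>j. x (xs ! j))) \<mu> \<longleftrightarrow>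
    (\<exists>e\<in>set xs. x e \<noteq> 0) \<and> (\<forall>e\<in>set xs. (\<Sum>f\<in>set xs. M e f * x f) = \<mu> * x e)"
proof -
  have "vec (length xs) (\<lambda>j. x (xs ! j)) \<noteq> 0\<^sub>v (length xs) \<longleftrightarrow> (\<exists>e\<in>set xs. x e \<noteq> 0)"
    by (force simp: vec_eq_iff in_set_conv_nth)
  moreover have "fun_mat xs M *\<^sub>v vec (length xs) (\<lambda>j. x (xs ! j)) = \<mu> \<cdot>\<^sub>v vec (length xs) (\<lambda>j. x (xs ! j))
      \<longleftrightarrow> (\<forall>e\<in>set xs. (\<Sum>f\<in>set xs. M e f * x f) = \<mu> * x e)"
    unfolding vec_eq_iff all_set_conv_all_nth
    by (simp add: fun_mat_mult_vec[OF xs] del: index_mult_mat_vec)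
  ultimately show ?thesis
    unfolding eigenvector_def by simp
qed

lemma is_eigenvalue_iff_eigenvalue_fun_mat:
  assumes xs: "distinct xs"
  shows "is_eigenvalue (set xs) M \<mu> \<longleftrightarrow> eigenvalue (fun_mat xs M) \<mu>"
proof
  assume "is_eigenvalue (set xs) M \<mu>"
  then obtain x where "eigenvector (fun_mat xs M) (vec (length xs) (\<lambda>j. x (xs ! j))) \<mu>"
    unfolding is_eigenvalue_def eigenvector_fun_mat_iff[OF xs] by blast
  then show "eigenvalue (fun_mat xs M) \<mu>"
    unfolding eigenvalue_def by blast
next
  assume "eigenvalue (fun_mat xs M) \<mu>"
  then obtain v where ev: "eigenvector (fun_mat xs M) v \<mu>"
    unfolding eigenvalue_def by blast
  define x where "x e = v $ inv_into {..<length xs} ((!) xs) e" for e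
  have "v = vec (length xs) (\<lambda>j. x (xs ! j))"
    using ev inv_into_f_f[OF inj_on_nth[OF xs]] unfolding x_def eigenvector_def
    by (intro eq_vecI) auto
  with ev have "eigenvector (fun_mat xs M) (vec (length xs) (\<lambda>j. x (xs ! j))) \<mu>"
    by simp
  then show "is_eigenvalue (set xs) M \<mu>"
    unfolding is_eigenvalue_def eigenvector_fun_mat_iff[OF xs] by blast
qed

lemma unitary_mat_fun_mat:
  assumes xs: "distinct xs" and orth: "orthonormal_cols (set xs) M"
  shows "unitary_mat (length xs) (fun_mat xs M)"
proof (rule unitary_matI_orthonormal_cols[OF fun_mat_carrier])
  fix j l assume jl: "j < length xs" "l < length xs"
  have "col (fun_mat xs M) j \<bullet>c col (fun_mat xs M) l = (\<Sum>e\<in>set xs. M e (xs ! j) * cnj (M e (xs ! l)))"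
    using jl by (simp add: scalar_prod_def sum_set_distinct_conv_nth[OF xs] atLeast0LessThan)
  also have "\<dots> = idmat (xs ! j) (xs ! l)"
    using orth jl unfolding orthonormal_cols_def by simp
  finally show "col (fun_mat xs M) j \<bullet>c col (fun_mat xs M) l = (if j = l then 1 else 0)"
    using idmat_nth[OF xs jl] jl by simp
qed

lemma matpow_periodic_iff_eigenvalues_roots_of_unity:
  assumes "finite I" and orth: "orthonormal_cols I M"
  shows "(\<exists>k>0. \<forall>i\<in>I. \<forall>j\<in>I. matpow I M k i j = idmat i j) \<longleftrightarrow>
    (\<forall>\<mu>. is_eigenvalue I M \<mu> \<longrightarrow> (\<exists>k>0. \<mu> ^ k = 1))"
proof -
  obtain xs where xs: "set xs = I" "distinct xs"
    using finite_distinct_list[OF \<open>finite I\<close>] by blast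
  have U: "unitary_mat (length xs) (fun_mat xs M)"
    using unitary_mat_fun_mat[OF xs(2)] orth xs(1) by simp
  show ?thesis
    unfolding xs(1)[symmetric] matpow_eq_idmat_iff_fun_mat[OF xs(2)]
      is_eigenvalue_iff_eigenvalue_fun_mat[OF xs(2)]
    by (rule unitary_mat_periodic_iff_roots_of_unity[OF U])
qed

lemma is_eigenvalue_norm_eq_1:
  assumes "finite I" and orth: "orthonormal_cols I M" and ev: "is_eigenvalue I M \<mu>"
  shows "cmod \<mu> = 1"
proof -
  obtain xs where xs: "set xs = I" "distinct xs"
    using finite_distinct_list[OF \<open>finite I\<close>] by blast
  have U: "unitary_mat (length xs) (fun_mat xs M)"
    using unitary_mat_fun_mat[OF xs(2)] orth xs(1) by simp
  show ?thesis
    using ev unfolding xs(1)[symmetric] is_eigenvalue_iff_eigenvalue_fun_mat[OF xs(2)]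
    by (rule unitary_mat_eigenvalue_norm[OF U])
qed

section \<open>Roots of unity on the unit circle\<close>

lemma cis_arccos:
  assumes "\<bar>l\<bar> \<le> 1"
  shows "Re (cis (arccos l)) = l" "cmod (cis (arccos l)) = 1"
  using assms by (simp_all add: cos_arccos_abs)

lemma cis_square: "cis t ^ 2 = 2 * complex_of_real (cos t) * cis t - 1"
  by (simp add: complex_eq_iff power2_eq_square cos_double sin_double algebra_simps)

lemma cis_root_of_unity_iff: "(\<exists>k>0. cis t ^ k = 1) \<longleftrightarrow> (\<exists>q\<in>\<rat>. \<bar>t\<bar> = pi * q)"
proof
  assume "\<exists>k>0. cis t ^ k = 1"
  then obtain k :: nat where k: "k > 0" "cis (real k * t) = 1"
    unfolding Complex.DeMoivre by blast
  then have "cos (real k * t) = 1" by (simp add: complex_eq_iff)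
  then obtain m :: int where "real k * t = real_of_int m * 2 * pi"
    by (auto simp: cos_one_2pi_int)
  then have "t = pi * (2 * of_int m / of_nat k)"
    using k(1) by (simp add: field_simps)
  then have "\<bar>t\<bar> = pi * \<bar>2 * of_int m / of_nat k\<bar>"
    by (simp add: abs_mult)
  moreover have "\<bar>2 * of_int m / of_nat k :: real\<bar> \<in> \<rat>" by simp
  ultimately show "\<exists>q\<in>\<rat>. \<bar>t\<bar> = pi * q" by blast
next
  assume "\<exists>q\<in>\<rat>. \<bar>t\<bar> = pi * q"
  then obtain q where q_rat: "q \<in> \<rat>" and t: "\<bar>t\<bar> = pi * q" by blast
  from q_rat obtain a b :: int where b: "b > 0" and q: "q = of_int a / of_int b"
    by (rule Rats_cases')
  have "t = pi * (of_int a / of_int b) \<or> t = pi * (of_int (- a) / of_int b)"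
    using t q by (cases "t \<ge> 0") auto
  then obtain c :: int where "t = pi * (of_int c / of_int b)"
    by blast
  then have "t * of_int b = pi * of_int c"
    using b by (simp add: field_simps)
  then have "real (2 * nat b) * t = 2 * pi * of_int c"
    using b by (simp add: algebra_simps)
  then have "cis t ^ (2 * nat b) = cis (2 * pi * of_int c)"
    unfolding Complex.DeMoivre by (rule arg_cong)
  also have "\<dots> = 1"
    by simp
  finally show "\<exists>k>0. cis t ^ k = 1"
    using b by (intro exI[of _ "2 * nat b"]) auto
qed

lemma root_of_unity_iff_arccos_Re_rational:
  assumes norm: "cmod \<mu> = 1"
  shows "(\<exists>k>0. \<mu> ^ k = 1) \<longleftrightarrow> (\<exists>q\<in>\<rat>. arccos (Re \<mu>) = pi * q)"
proof -
  have "\<mu> \<noteq> 0" using norm by auto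
  then have \<mu>: "\<mu> = cis (Arg \<mu>)"
    using cis_Arg[of \<mu>] norm by (simp add: sgn_eq)
  have "-pi < Arg \<mu>" "Arg \<mu> \<le> pi" using Arg_bounded by auto
  then have "arccos (cos \<bar>Arg \<mu>\<bar>) = \<bar>Arg \<mu>\<bar>"
    by (intro arccos_cos) auto
  then have "arccos (Re \<mu>) = \<bar>Arg \<mu>\<bar>"
    by (subst \<mu>) simp
  then show ?thesis
    using cis_root_of_unity_iff[of "Arg \<mu>", folded \<mu>] by simp
qed

section \<open>Eigenvalues of the Grover walk and of the transition matrix\<close>

locale finite_simple_graph =
  fixes V :: "'v set" and Adj :: "'v \<Rightarrow> 'v \<Rightarrow> bool"
  assumes simple: "simple_graph V Adj"
begin

abbreviation "d v \<equiv> deg V Adj v"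
abbreviation "U \<equiv> grover_U V Adj"
abbreviation "T \<equiv> trans_T V Adj"

definition nbrs :: "'v \<Rightarrow> 'v set" where
  "nbrs v = {u \<in> V. Adj v u}"

definition in_arcs :: "'v \<Rightarrow> ('v \<times> 'v) set" where
  "in_arcs v = {e \<in> arcs Adj. snd e = v}"

definition out_arcs :: "'v \<Rightarrow> ('v \<times> 'v) set" where
  "out_arcs v = {e \<in> arcs Adj. fst e = v}"

lemma finite_V: "finite V"
  using simple unfolding simple_graph_def by auto

lemma adj_in_V: "Adj u v \<Longrightarrow> u \<in> V \<and> v \<in> V"
  using simple unfolding simple_graph_def by auto

lemma adj_sym: "Adj u v \<Longrightarrow> Adj v u"
  using simple unfolding simple_graph_def by auto

lemma finite_arcs: "finite (arcs Adj)"
proof (rule finite_subset)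
  show "arcs Adj \<subseteq> V \<times> V" unfolding arcs_def using adj_in_V by auto
qed (simp add: finite_V)

lemma arcsD: "e \<in> arcs Adj \<Longrightarrow> Adj (fst e) (snd e)"
  unfolding arcs_def by auto

lemma swap_arcs: "e \<in> arcs Adj \<Longrightarrow> prod.swap e \<in> arcs Adj"
  unfolding arcs_def using adj_sym by auto

lemma fst_arc_in_V: "e \<in> arcs Adj \<Longrightarrow> fst e \<in> V"
  using arcsD adj_in_V by blast

lemma deg_eq_card_nbrs: "d v = card (nbrs v)"
  unfolding deg_def nbrs_def ..

lemma in_arcs_eq: "in_arcs v = (\<lambda>u. (u, v)) ` nbrs v"
  unfolding in_arcs_def nbrs_def arcs_def using adj_in_V adj_sym by force

lemma out_arcs_eq: "out_arcs v = prod.swap ` in_arcs v"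
  unfolding out_arcs_def in_arcs_def using swap_arcs by force

lemma sum_in_arcs: "(\<Sum>f\<in>in_arcs v. g f) = (\<Sum>u\<in>nbrs v. g (u, v))"
  unfolding in_arcs_eq by (subst sum.reindex) (auto simp: inj_on_def)

lemma sum_out_arcs: "(\<Sum>e\<in>out_arcs v. g e) = (\<Sum>f\<in>in_arcs v. g (prod.swap f))"
  unfolding out_arcs_eq by (subst sum.reindex) (auto simp: inj_on_def)

lemma card_in_arcs: "card (in_arcs v) = d v"
  unfolding in_arcs_eq deg_eq_card_nbrs by (rule card_image) (auto simp: inj_on_def)

lemma card_out_arcs: "card (out_arcs v) = d v"
  unfolding out_arcs_eq card_in_arcs[symmetric] by (rule card_image) (auto simp: inj_on_def)

lemma finite_nbrs: "finite (nbrs v)"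
  unfolding nbrs_def using finite_V by simp

lemma finite_in_arcs: "finite (in_arcs v)"
  unfolding in_arcs_eq using finite_nbrs by simp

lemma deg_pos:
  assumes "Adj v u"
  shows "d v > 0"
proof -
  have "u \<in> nbrs v" using assms adj_in_V unfolding nbrs_def by blast
  then show ?thesis unfolding deg_eq_card_nbrs using finite_nbrs card_gt_0_iff by blast
qed

lemma grover_U_eq:
  "U e f = (if fst e = snd f then 2 / of_nat (d (snd f)) else 0) - (if e = prod.swap f then 1 else 0)"
  unfolding grover_U_def by auto

lemma grover_U_apply:
  assumes e: "e \<in> arcs Adj"
  shows "(\<Sum>f\<in>arcs Adj. U e f * \<psi> f) =
    2 / of_nat (d (fst e)) * (\<Sum>f\<in>in_arcs (fst e). \<psi> f) - \<psi> (prod.swap e)"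
proof -
  have "(\<Sum>f\<in>arcs Adj. U e f * \<psi> f) =
      (\<Sum>f\<in>arcs Adj. if snd f = fst e then 2 / of_nat (d (fst e)) * \<psi> f else 0) -
      (\<Sum>f\<in>arcs Adj. if f = prod.swap e then \<psi> f else 0)"
    unfolding sum_subtractf[symmetric] by (intro sum.cong refl) (auto simp: grover_U_eq algebra_simps)
  also have "(\<Sum>f\<in>arcs Adj. if snd f = fst e then 2 / of_nat (d (fst e)) * \<psi> f else 0) =
      2 / of_nat (d (fst e)) * (\<Sum>f\<in>in_arcs (fst e). \<psi> f)"
    unfolding in_arcs_def sum_distrib_left sum.inter_filter[OF finite_arcs]
    by (intro sum.cong) auto
  also have "(\<Sum>f\<in>arcs Adj. if f = prod.swap e then \<psi> f else 0) = \<psi> (prod.swap e)"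
    using finite_arcs swap_arcs[OF e] by simp
  finally show ?thesis .
qed

lemma grover_U_out_arcs_sum:
  assumes f: "f \<in> arcs Adj"
  shows "(\<Sum>e\<in>out_arcs v. U e f) = (if v = snd f then 1 else 0)"
proof -
  have "(\<Sum>e\<in>out_arcs v. U e f) = (\<Sum>e\<in>out_arcs v.
      (if v = snd f then 2 / of_nat (d (snd f)) else 0) - (if e = prod.swap f then 1 else 0))"
    by (intro sum.cong refl) (auto simp: grover_U_eq out_arcs_def)
  also have "\<dots> = of_nat (d v) * (if v = snd f then 2 / of_nat (d (snd f)) else 0) -
      (\<Sum>e\<in>out_arcs v. if e = prod.swap f then 1 else 0)"
    by (simp only: sum_subtractf sum_constant card_out_arcs of_nat_id)
  also have "(\<Sum>e\<in>out_arcs v. if e = prod.swap f then 1 else 0) = (if v = snd f then 1 else (0::complex))"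
    using finite_arcs swap_arcs[OF f] by (auto simp: out_arcs_def)
  finally show ?thesis
    using deg_pos[OF adj_sym[OF arcsD[OF f]]] by auto
qed

lemma grover_U_orthonormal_cols: "orthonormal_cols (arcs Adj) U"
  unfolding orthonormal_cols_def
proof (intro ballI)
  fix f g assume f: "f \<in> arcs Adj" and g: "g \<in> arcs Adj"
  have cnj_U: "cnj (U e g) = U e g" for e
    by (simp add: grover_U_def)
  have "(\<Sum>e\<in>arcs Adj. U e f * cnj (U e g)) =
      2 / of_nat (d (snd g)) * (\<Sum>e\<in>out_arcs (snd g). U e f) - U (prod.swap g) f"
  proof -
    have "(\<Sum>e\<in>arcs Adj. U e f * cnj (U e g)) =
        (\<Sum>e\<in>arcs Adj. if fst e = snd g then 2 / of_nat (d (snd g)) * U e f else 0) -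
        (\<Sum>e\<in>arcs Adj. if e = prod.swap g then U e f else 0)"
      unfolding cnj_U sum_subtractf[symmetric]
      by (intro sum.cong refl) (auto simp: grover_U_eq[of _ g] algebra_simps)
    also have "(\<Sum>e\<in>arcs Adj. if fst e = snd g then 2 / of_nat (d (snd g)) * U e f else 0) =
        2 / of_nat (d (snd g)) * (\<Sum>e\<in>out_arcs (snd g). U e f)"
      unfolding out_arcs_def sum_distrib_left sum.inter_filter[OF finite_arcs]
      by (intro sum.cong) auto
    also have "(\<Sum>e\<in>arcs Adj. if e = prod.swap g then U e f else 0) = U (prod.swap g) f"
      using finite_arcs swap_arcs[OF g] by simp
    finally show ?thesis .
  qed
  also have "\<dots> = idmat f g"
    using grover_U_out_arcs_sum[OF f, of "snd g"]
    by (auto simp: grover_U_eq idmat_def dest: arg_cong[where f = prod.swap])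
  finally show "(\<Sum>e\<in>arcs Adj. U e f * cnj (U e g)) = idmat f g" .
qed

lemma trans_T_apply: "(\<Sum>j\<in>V. T i j * x j) = (\<Sum>j\<in>nbrs i. x j) / of_nat (d i)"
proof -
  have "(\<Sum>j\<in>V. T i j * x j) = (\<Sum>j\<in>V. if Adj i j then x j / of_nat (d i) else 0)"
    unfolding trans_T_def by (intro sum.cong) auto
  also have "\<dots> = (\<Sum>j\<in>nbrs i. x j / of_nat (d i))"
    unfolding nbrs_def by (simp add: sum.inter_filter[OF finite_V])
  finally show ?thesis by (simp add: sum_divide_distrib)
qed

lemma T_eigenvalue_abs_le_1:
  assumes "is_eigenvalue V T (complex_of_real l)"
  shows "\<bar>l\<bar> \<le> 1"
proof -
  obtain x where nz: "\<exists>v\<in>V. x v \<noteq> 0"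
    and eig: "\<And>v. v \<in> V \<Longrightarrow> (\<Sum>u\<in>V. T v u * x u) = complex_of_real l * x v"
    using assms unfolding is_eigenvalue_def by blast
  obtain w where w: "w \<in> V" "cmod (x w) = Max ((\<lambda>v. cmod (x v)) ` V)"
    using Max_in[of "(\<lambda>v. cmod (x v)) ` V"] finite_V nz by fastforce
  have max: "cmod (x v) \<le> cmod (x w)" if "v \<in> V" for v
    using that finite_V unfolding w(2) by (intro Max_ge) auto
  have pos: "cmod (x w) > 0"
  proof -
    obtain v where v: "v \<in> V" "x v \<noteq> 0" using nz by blast
    then show ?thesis using max[OF v(1)] by (metis zero_less_norm_iff order_less_le_trans)
  qed
  have "\<bar>l\<bar> * cmod (x w) = cmod (\<Sum>u\<in>nbrs w. x u) / of_nat (d w)"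
    using eig[OF w(1)] trans_T_apply[of w x] by (metis norm_divide norm_mult norm_of_real norm_of_nat)
  also have "\<dots> \<le> (\<Sum>u\<in>nbrs w. cmod (x u)) / of_nat (d w)"
    by (intro divide_right_mono norm_sum) simp
  also have "\<dots> \<le> of_nat (d w) * cmod (x w) / of_nat (d w)"
    using max unfolding deg_eq_card_nbrs nbrs_def by (intro divide_right_mono sum_bounded_above) auto
  also have "\<dots> \<le> cmod (x w)"
    by (cases "d w = 0") auto
  finally show ?thesis
    using pos by simp
qed

lemma grover_eigenvector_of_T_eigenvector:
  assumes eig: "\<And>v. v \<in> V \<Longrightarrow> (\<Sum>u\<in>V. T v u * x u) = complex_of_real l * x v"
    and quad: "\<mu> ^ 2 = 2 * complex_of_real l * \<mu> - 1"
    and e: "e \<in> arcs Adj"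
  shows "(\<Sum>f\<in>arcs Adj. U e f * (x (snd f) - \<mu> * x (fst f))) = \<mu> * (x (snd e) - \<mu> * x (fst e))"
proof -
  define v where "v = fst e"
  have v: "v \<in> V" "d v > 0"
    unfolding v_def using fst_arc_in_V[OF e] deg_pos[OF arcsD[OF e]] by auto
  have nbrs_sum: "(\<Sum>u\<in>nbrs v. x u) = of_nat (d v) * (complex_of_real l * x v)"
    using eig[OF v(1)] trans_T_apply[of v x] v(2) by (simp add: field_simps)
  have "(\<Sum>f\<in>in_arcs v. x (snd f) - \<mu> * x (fst f)) = (\<Sum>u\<in>nbrs v. x v - \<mu> * x u)"
    unfolding sum_in_arcs by simp
  also have "\<dots> = of_nat (d v) * x v - \<mu> * (of_nat (d v) * (complex_of_real l * x v))"
    unfolding nbrs_sum[symmetric] by (simp add: sum_subtractf sum_distrib_left deg_eq_card_nbrs)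
  finally have in_sum: "(\<Sum>f\<in>in_arcs v. x (snd f) - \<mu> * x (fst f)) =
      of_nat (d v) * (1 - \<mu> * complex_of_real l) * x v"
    by (simp add: algebra_simps)
  have "(\<Sum>f\<in>arcs Adj. U e f * (x (snd f) - \<mu> * x (fst f))) =
      (1 - 2 * \<mu> * complex_of_real l) * x v + \<mu> * x (snd e)"
    unfolding grover_U_apply[OF e] v_def[symmetric] in_sum using v(2)
    by (simp add: v_def field_simps)
  also have "\<dots> = \<mu> * (x (snd e) - \<mu> * x (fst e))"
  proof -
    have quad': "1 - 2 * \<mu> * complex_of_real l = - (\<mu> ^ 2)"
      using quad by (simp add: algebra_simps)
    show ?thesis
      unfolding quad' v_def by (simp add: algebra_simps power2_eq_square)
  qed
  finally show ?thesis .
qed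

lemma vanishing_lift_imp_T_eigenvalue_trivial:
  assumes eig: "\<And>v. v \<in> V \<Longrightarrow> (\<Sum>u\<in>V. T v u * x u) = complex_of_real l * x v"
    and quad: "\<mu> ^ 2 = 2 * complex_of_real l * \<mu> - 1"
    and w: "w \<in> V" "x w \<noteq> 0"
    and vanish: "\<And>e. e \<in> arcs Adj \<Longrightarrow> x (snd e) = \<mu> * x (fst e)"
  shows "l \<in> {-1, 0, 1}"
proof (cases "nbrs w = {}")
  case True
  then have "complex_of_real l * x w = 0"
    using eig[OF w(1)] trans_T_apply[of w x] by simp
  then show ?thesis using w(2) by simp
next
  case False
  then obtain u where "Adj w u" unfolding nbrs_def by blast
  then have wu: "(w, u) \<in> arcs Adj" and uw: "(u, w) \<in> arcs Adj"
    unfolding arcs_def using adj_sym by auto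
  have "x w = \<mu> * x u"
    using vanish[OF uw] by simp
  also have "x u = \<mu> * x w"
    using vanish[OF wu] by simp
  finally have "x w = \<mu> ^ 2 * x w"
    by (simp add: power2_eq_square)
  then have \<mu>2: "\<mu> ^ 2 = 1" using w(2) by simp
  then have \<mu>: "\<mu> = 1 \<or> \<mu> = -1"
    by (simp add: power2_eq_1_iff)
  have "2 * (complex_of_real l * \<mu>) = 2"
    using quad \<mu>2 by (simp add: algebra_simps)
  then have l\<mu>: "complex_of_real l * \<mu> = 1"
    by simp
  from \<mu> show ?thesis
  proof
    assume "\<mu> = 1"
    then show ?thesis using l\<mu> by simp
  next
    assume "\<mu> = -1"
    then have "complex_of_real l = -1" using l\<mu> by (simp add: minus_equation_iff)
    then show ?thesis by (simp add: of_real_eq_iff[of l "-1", simplified])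
  qed
qed

lemma T_eigenvalue_imp_grover_eigenvalue:
  assumes ev: "is_eigenvalue V T (complex_of_real l)"
    and quad: "\<mu> ^ 2 = 2 * complex_of_real l * \<mu> - 1"
  shows "l \<in> {-1, 0, 1} \<or> is_eigenvalue (arcs Adj) U \<mu>"
proof -
  obtain x where nz: "\<exists>v\<in>V. x v \<noteq> 0"
    and eig: "\<And>v. v \<in> V \<Longrightarrow> (\<Sum>u\<in>V. T v u * x u) = complex_of_real l * x v"
    using ev unfolding is_eigenvalue_def by blast
  define \<psi> where "\<psi> e = x (snd e) - \<mu> * x (fst e)" for e
  show ?thesis
  proof (cases "\<exists>e\<in>arcs Adj. \<psi> e \<noteq> 0")
    case True
    have "is_eigenvalue (arcs Adj) U \<mu>"
      unfolding is_eigenvalue_def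
    proof (intro exI[of _ \<psi>] conjI ballI)
      fix e assume "e \<in> arcs Adj"
      then show "(\<Sum>f\<in>arcs Adj. U e f * \<psi> f) = \<mu> * \<psi> e"
        using grover_eigenvector_of_T_eigenvector[OF eig quad, of e] unfolding \<psi>_def by simp
    qed (use True in blast)
    then show ?thesis ..
  next
    case False
    obtain w where "w \<in> V" "x w \<noteq> 0" using nz by blast
    then have "l \<in> {-1, 0, 1}"
      using vanishing_lift_imp_T_eigenvalue_trivial[OF eig quad] False unfolding \<psi>_def by auto
    then show ?thesis ..
  qed
qed

lemma in_flow_of_grover_eigenvector:
  assumes eigU: "\<And>e. e \<in> arcs Adj \<Longrightarrow> (\<Sum>f\<in>arcs Adj. U e f * \<psi> f) = \<mu> * \<psi> e"
    and norm: "cmod \<mu> = 1" and v: "v \<in> V"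
  defines "X \<equiv> \<lambda>u. \<Sum>f\<in>in_arcs u. \<psi> f"
  shows "complex_of_real (Re \<mu>) * X v = (\<Sum>u\<in>nbrs v. X u / of_nat (d u))"
proof -
  define Y where "Y = (\<Sum>f\<in>out_arcs v. \<psi> f)"
  have step: "\<mu> * \<psi> e = 2 / of_nat (d (fst e)) * X (fst e) - \<psi> (prod.swap e)" if "e \<in> arcs Adj" for e
    using eigU[OF that] grover_U_apply[OF that] unfolding X_def by simp
  have "\<mu> * Y = (\<Sum>e\<in>out_arcs v. 2 / of_nat (d v) * X v - \<psi> (prod.swap e))"
    unfolding Y_def sum_distrib_left by (intro sum.cong refl) (auto simp: out_arcs_def step)
  also have "\<dots> = of_nat (d v) * (2 / of_nat (d v) * X v) - X v"
    by (simp add: sum_subtractf card_out_arcs sum_out_arcs X_def)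
  also have "\<dots> = X v"
    using card_in_arcs[of v] finite_in_arcs[of v] by (cases "d v = 0") (auto simp: X_def)
  finally have \<mu>Y: "\<mu> * Y = X v" .
  have "cnj \<mu> * \<mu> = 1"
    using norm complex_norm_square[of \<mu>] by (simp add: mult.commute)
  then have Y: "Y = cnj \<mu> * X v"
    unfolding \<mu>Y[symmetric] by (simp add: mult.assoc[symmetric])
  have "\<mu> * X v = (\<Sum>e\<in>in_arcs v. \<mu> * \<psi> e)"
    unfolding X_def by (simp add: sum_distrib_left)
  also have "\<dots> = (\<Sum>e\<in>in_arcs v. 2 / of_nat (d (fst e)) * X (fst e) - \<psi> (prod.swap e))"
    by (intro sum.cong refl) (auto simp: in_arcs_def step)
  also have "\<dots> = (\<Sum>u\<in>nbrs v. 2 / of_nat (d u) * X u) - Y"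
    by (simp add: sum_subtractf sum_in_arcs Y_def sum_out_arcs)
  finally have "(\<mu> + cnj \<mu>) * X v = 2 * (\<Sum>u\<in>nbrs v. X u / of_nat (d u))"
    unfolding Y by (simp add: algebra_simps sum_distrib_left)
  then show ?thesis
    by (simp add: complex_add_cnj)
qed

lemma grover_eigenvalue_imp_T_eigenvalue:
  assumes ev: "is_eigenvalue (arcs Adj) U \<mu>" and norm: "cmod \<mu> = 1"
  shows "\<mu> ^ 2 = 1 \<or> is_eigenvalue V T (complex_of_real (Re \<mu>))"
proof -
  obtain \<psi> where nz: "\<exists>e\<in>arcs Adj. \<psi> e \<noteq> 0"
    and eigU: "\<And>e. e \<in> arcs Adj \<Longrightarrow> (\<Sum>f\<in>arcs Adj. U e f * \<psi> f) = \<mu> * \<psi> e"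
    using ev unfolding is_eigenvalue_def by blast
  define X where "X u = (\<Sum>f\<in>in_arcs u. \<psi> f)" for u
  show ?thesis
  proof (cases "\<exists>w\<in>V. X w \<noteq> 0")
    case True
    then obtain w where w: "w \<in> V" "X w \<noteq> 0" by blast
    then have "in_arcs w \<noteq> {}"
      unfolding X_def by auto
    then have "d w \<noteq> 0"
      by (simp add: card_in_arcs[symmetric] finite_in_arcs)
    have "is_eigenvalue V T (complex_of_real (Re \<mu>))"
      unfolding is_eigenvalue_def
    proof (intro exI[of _ "\<lambda>u. X u / of_nat (d u)"] conjI ballI)
      show "\<exists>u\<in>V. X u / of_nat (d u) \<noteq> 0" using w \<open>d w \<noteq> 0\<close> by auto
      fix v assume "v \<in> V"
      then show "(\<Sum>u\<in>V. T v u * (X u / of_nat (d u))) = complex_of_real (Re \<mu>) * (X v / of_nat (d v))"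
        using in_flow_of_grover_eigenvector[OF eigU norm] unfolding trans_T_apply X_def by simp
    qed
    then show ?thesis ..
  next
    case False
    obtain e where e: "e \<in> arcs Adj" "\<psi> e \<noteq> 0" using nz by blast
    have flip: "\<mu> * \<psi> a = - \<psi> (prod.swap a)" if "a \<in> arcs Adj" for a
      using eigU[OF that] grover_U_apply[OF that] False fst_arc_in_V[OF that] unfolding X_def by simp
    have "\<mu> ^ 2 * \<psi> e = - (\<mu> * \<psi> (prod.swap e))"
      using flip[OF e(1)] by (simp add: power2_eq_square mult.assoc)
    also have "\<dots> = \<psi> e"
      using flip[OF swap_arcs[OF e(1)]] by simp
    finally show ?thesis
      using e(2) by simp
  qed
qed

lemma arccos_T_eigenvalue_rational:
  assumes roots: "\<forall>\<mu>. is_eigenvalue (arcs Adj) U \<mu> \<longrightarrow> (\<exists>k>0. \<mu> ^ k = 1)"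
    and ev: "is_eigenvalue V T (complex_of_real l)"
  shows "\<exists>q\<in>\<rat>. arccos l = pi * q"
proof -
  have l: "\<bar>l\<bar> \<le> 1" by (rule T_eigenvalue_abs_le_1[OF ev])
  have "cis (arccos l) ^ 2 = 2 * complex_of_real l * cis (arccos l) - 1"
    using cis_square[of "arccos l"] cos_arccos_abs[OF l] by simp
  from T_eigenvalue_imp_grover_eigenvalue[OF ev this] show ?thesis
  proof
    assume "l \<in> {-1, 0, 1}"
    then show ?thesis by (auto intro: bexI[of _ 1] bexI[of _ "1/2"] bexI[of _ 0])
  next
    assume "is_eigenvalue (arcs Adj) U (cis (arccos l))"
    then show ?thesis
      using roots root_of_unity_iff_arccos_Re_rational[OF cis_arccos(2)[OF l]] cis_arccos(1)[OF l]
      by simp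
  qed
qed

lemma grover_eigenvalue_root_of_unity:
  assumes rational: "\<forall>l::real. is_eigenvalue V T (complex_of_real l) \<longrightarrow> (\<exists>q\<in>\<rat>. arccos l = pi * q)"
    and ev: "is_eigenvalue (arcs Adj) U \<mu>"
  shows "\<exists>k>0. \<mu> ^ k = 1"
proof -
  have norm: "cmod \<mu> = 1"
    by (rule is_eigenvalue_norm_eq_1[OF finite_arcs grover_U_orthonormal_cols ev])
  from grover_eigenvalue_imp_T_eigenvalue[OF ev norm] show ?thesis
  proof
    assume "\<mu> ^ 2 = 1"
    then show ?thesis by (intro exI[of _ 2]) simp
  next
    assume "is_eigenvalue V T (complex_of_real (Re \<mu>))"
    then show ?thesis
      using rational root_of_unity_iff_arccos_Re_rational[OF norm] by blast
  qed
qed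

end

theorem corollary2p2:
  fixes V :: "'v set" and Adj :: "'v \<Rightarrow> 'v \<Rightarrow> bool"
  assumes "simple_graph V Adj" and "connected_graph V Adj"
  shows "grover_periodic V Adj \<longleftrightarrow>
    (\<forall>l::real. is_eigenvalue V (trans_T V Adj) (complex_of_real l) \<longrightarrow>
       (\<exists>q\<in>\<rat>. arccos l = pi * q))"
proof -
  interpret finite_simple_graph V Adj
    by (rule finite_simple_graph.intro) (fact assms(1))
  have "grover_periodic V Adj \<longleftrightarrow> (\<forall>\<mu>. is_eigenvalue (arcs Adj) U \<mu> \<longrightarrow> (\<exists>k>0. \<mu> ^ k = 1))"
    unfolding grover_periodic_def
    by (rule matpow_periodic_iff_eigenvalues_roots_of_unity[OF finite_arcs grover_U_orthonormal_cols])
  also have "\<dots> \<longleftrightarrow> (\<forall>l::real. is_eigenvalue V T (complex_of_real l) \<longrightarrow> (\<exists>q\<in>\<rat>. arccos l = pi * q))"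
    using arccos_T_eigenvalue_rational grover_eigenvalue_root_of_unity by blast
  finally show ?thesis .
qed

end
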